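(* Let $T\ge 2$ and $1\le k<\lceil T/2\rceil$; put $T_c=\lceil T/(2k-1)\rceil$ and $T_{\text{last}}=T-(2k-1)(T_c-1)$. For $j\in\{1,\dots,T_c-1\}$ let $\mathcal{P}_j$ be the set of distinct vectors among $\{\mathbf{0}_{2k-1},\mathbf{1}_{2k-1},\mathbf{e}^{2k-1}_1,\dots,\mathbf{e}^{2k-1}_{2k-1}\}\subseteq\mathbb{F}_2^{2k-1}$, and let $\mathcal{P}_{T_c}$ be the set of distinct vectors among $\{\mathbf{0}_{T_{\text{last}}},\mathbf{1}_{T_{\text{last}}},\mathbf{e}^{T_{\text{last}}}_1,\dots,\mathbf{e}^{T_{\text{last}}}_{T_{\text{last}}}\}\subseteq\mathbb{F}_2^{T_{\text{last}}}$. Let $\mathbf{P}$ be the matrix whose rows are all concatenations $(\mathbf{v}_1,\mathbf{v}_2,\dots,\mathbf{v}_{T_c})\in\mathbb{F}_2^T$ with $\mathbf{v}_j\in\mathcal{P}_j$ for each $j$ (one row per element of $\mathcal{P}_1\times\cdots\times\mathcal{P}_{T_c}$). Then $\mathbf{P}$ has $\prod_{j=1}^{T_c}|\mathcal{P}_j|$ rows, which equals $2^T$ if $k=1$, $2(2k+1)^{T_c-1}$ if $k\ne1$ and $T_{\text{last}}=1$, and $(2k+1)^{T_c-1}(T_{\text{last}}+2)$ otherwise; and every vector of $\mathbb{F}_2^T$ is the sum over $\mathbb{F}_2$ of at most $k$ rows of $\mathbf{P}$.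
   Context: $\mathbf{0}_j$ and $\mathbf{1}_j$ denote the all-zero and all-ones row vectors of length $j$, and $\mathbf{e}^j_i$ is the length-$j$ row vector with a single $1$ in position $i$. *)

theory Defs
  imports Complex_Main "HOL-Library.Z2" "HOL-Library.FuncSet"
begin

text \<open>Vectors of F_2^m are represented as functions \<open>nat \<Rightarrow> bit\<close> (coordinates
  0-indexed), vanishing at all positions \<open>\<ge> m\<close>.\<close>

definition F2vecs :: "nat \<Rightarrow> (nat \<Rightarrow> bit) set" where
  "F2vecs m = {v. \<forall>i\<ge>m. v i = 0}"

definition zero_vec :: "nat \<Rightarrow> (nat \<Rightarrow> bit)" where
  "zero_vec m = (\<lambda>i. 0)"

definition ones_vec :: "nat \<Rightarrow> (nat \<Rightarrow> bit)" where
  "ones_vec m = (\<lambda>i. if i < m then 1 else 0)"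

definition unit_vec :: "nat \<Rightarrow> nat \<Rightarrow> (nat \<Rightarrow> bit)" where
  "unit_vec m a = (\<lambda>i. if i = a \<and> a < m then 1 else 0)"

definition Pset :: "nat \<Rightarrow> (nat \<Rightarrow> bit) set" where
  "Pset m = {zero_vec m, ones_vec m} \<union> {unit_vec m a | a. a < m}"

definition Tc :: "nat \<Rightarrow> nat \<Rightarrow> nat" where
  "Tc T k = nat \<lceil>real T / real (2*k - 1)\<rceil>"

definition Tlast :: "nat \<Rightarrow> nat \<Rightarrow> nat" where
  "Tlast T k = T - (2*k - 1) * (Tc T k - 1)"

text \<open>Length of the block with (0-indexed) number \<open>j\<close>, \<open>j < Tc T k\<close>.\<close>
definition blocklen :: "nat \<Rightarrow> nat \<Rightarrow> nat \<Rightarrow> nat" where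
  "blocklen T k j = (if j < Tc T k - 1 then 2*k - 1 else Tlast T k)"

text \<open>Concatenation \<open>(v_0, ..., v_{Tc-1})\<close>: block \<open>j\<close> occupies positions
  \<open>(2k-1)j, ..., (2k-1)j + blocklen j - 1\<close>.\<close>
definition concat_blocks :: "nat \<Rightarrow> nat \<Rightarrow> (nat \<Rightarrow> nat \<Rightarrow> bit) \<Rightarrow> (nat \<Rightarrow> bit)" where
  "concat_blocks T k w = (\<lambda>i. if i < T then
       (let j = i div (2*k - 1) in w j (i - (2*k - 1) * j)) else 0)"

definition Prows :: "nat \<Rightarrow> nat \<Rightarrow> (nat \<Rightarrow> bit) set" where
  "Prows T k = concat_blocks T k ` (PiE {0..<Tc T k} (\<lambda>j. Pset (blocklen T k j)))"

end

theory Submission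
  imports Defs
begin

text \<open>Split \<open>v \<in> \<bbbF>\<^sub>2\<^sup>T\<close> into the \<open>T\<^sub>c\<close> blocks. A block \<open>u\<close> of length \<open>m \<le> 2k - 1\<close>
  is a sum of \<open>k\<close> elements of \<open>\<P>\<^sub>m\<close>: if \<open>u\<close> has weight at most \<open>k\<close>, use its unit
  vectors (padded with \<open>0\<^sub>m\<close>); otherwise its complement has weight at most \<open>k - 1\<close>, and
  \<open>u\<close> is \<open>1\<^sub>m\<close> plus the unit vectors of the complement. Concatenating the \<open>t\<close>-th
  summands of all blocks gives \<open>k\<close> rows of \<open>P\<close> summing to \<open>v\<close>; repeated rows cancel in
  pairs over \<open>\<bbbF>\<^sub>2\<close>, leaving at most \<open>k\<close> distinct ones. The row count is \<open>\<Prod>|\<P>\<^sub>j|\<close>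
  because concatenation is injective, and \<open>|\<P>\<^sub>m| = m + 2\<close> for \<open>m \<ge> 2\<close>, \<open>|\<P>\<^sub>1| = 2\<close>.\<close>

lemma bit_add_self [simp]: "(x::bit) + x = 0"
  by (cases x) simp_all

lemma sum_bit_vectors_as_sum_of_distinct:
  fixes f :: "nat \<Rightarrow> 'i \<Rightarrow> bit"
  shows "\<exists>S \<subseteq> f ` {..<n}. card S \<le> n \<and> (\<forall>i. (\<Sum>t<n. f t i) = (\<Sum>r\<in>S. r i))"
proof (induction n)
  case 0
  show ?case by auto
next
  case (Suc n)
  then obtain S where S: "S \<subseteq> f ` {..<n}" "card S \<le> n"
    and sum_S: "\<And>i. (\<Sum>t<n. f t i) = (\<Sum>r\<in>S. r i)" by blast
  have fin: "finite S" using S(1) finite_subset by blast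
  show ?case
  proof (cases "f n \<in> S")
    case True
    have "(\<Sum>t<Suc n. f t i) = (\<Sum>r\<in>S - {f n}. r i)" for i
    proof -
      have "(\<Sum>t<Suc n. f t i) = (f n i + (\<Sum>r\<in>S - {f n}. r i)) + f n i"
        using sum_S[of i] sum.remove[OF fin True, of "\<lambda>r. r i"] by (simp only: sum.lessThan_Suc)
      also have "\<dots> = (\<Sum>r\<in>S - {f n}. r i) + (f n i + f n i)"
        by (simp only: ac_simps)
      finally show ?thesis by (simp only: bit_add_self add_0_right)
    qed
    moreover have "card (S - {f n}) \<le> Suc n" using card_Diff1_le[of S "f n"] S(2) by linarith
    ultimately show ?thesis using S(1) by (intro exI[of _ "S - {f n}"]) auto
  next
    case False
    have "(\<Sum>t<Suc n. f t i) = (\<Sum>r\<in>insert (f n) S. r i)" for i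
      using sum_S[of i] sum.insert[OF fin False, of "\<lambda>r. r i"]
      by (simp only: sum.lessThan_Suc add.commute)
    moreover have "card (insert (f n) S) \<le> Suc n" using S(2) fin False by simp
    ultimately show ?thesis using S(1) by (intro exI[of _ "insert (f n) S"]) auto
  qed
qed

lemma Pset_subset_F2vecs: "Pset m \<subseteq> F2vecs m"
  by (auto simp: Pset_def F2vecs_def zero_vec_def ones_vec_def unit_vec_def)

lemma sum_Pset_eq_indicator:
  assumes "A \<subseteq> {..<m}" "card A \<le> n"
  shows "\<exists>g. (\<forall>t<n. g t \<in> Pset m) \<and> (\<forall>i. (\<Sum>t<n. g t i) = of_bool (i \<in> A))"
  using assms
proof (induction n arbitrary: A)
  case 0
  then have "A = {}" using finite_subset by fastforce
  then show ?case by auto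
next
  case (Suc n)
  show ?case
  proof (cases "A = {}")
    case True
    then show ?thesis by (intro exI[of _ "\<lambda>t. zero_vec m"]) (auto simp: Pset_def zero_vec_def)
  next
    case False
    then obtain a where a: "a \<in> A" by auto
    have "finite A" using Suc.prems(1) finite_subset by blast
    then have "card (A - {a}) \<le> n" using Suc.prems(2) a by simp
    then obtain g where g: "\<forall>t<n. g t \<in> Pset m" "\<And>i. (\<Sum>t<n. g t i) = of_bool (i \<in> A - {a})"
      using Suc.IH[of "A - {a}"] Suc.prems(1) by blast
    have am: "a < m" using a Suc.prems(1) by auto
    show ?thesis
    proof (intro exI[of _ "g(n := unit_vec m a)"] conjI allI impI)
      show "(g(n := unit_vec m a)) t \<in> Pset m" if "t < Suc n" for t
        using that g(1) am by (auto simp: Pset_def less_Suc_eq)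
      show "(\<Sum>t<Suc n. (g(n := unit_vec m a)) t i) = of_bool (i \<in> A)" for i
        using g(2)[of i] a am by (auto simp: unit_vec_def)
    qed
  qed
qed

lemma F2vecs_sum_Pset:
  assumes "u \<in> F2vecs m" "m < 2*k"
  shows "\<exists>g. (\<forall>t<k. g t \<in> Pset m) \<and> (\<forall>i. (\<Sum>t<k. g t i) = u i)"
proof -
  define A where "A = {i. u i = 1}"
  have A_sub: "A \<subseteq> {..<m}"
    using assms(1) by (auto simp: A_def F2vecs_def not_less[symmetric])
  have u_eq: "u i = of_bool (i \<in> A)" for i
    unfolding A_def by (cases "u i") auto
  show ?thesis
  proof (cases "card A \<le> k")
    case True
    then show ?thesis using sum_Pset_eq_indicator[OF A_sub] u_eq by metis
  next
    case False
    define B where "B = {..<m} - A"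
    have "card B = m - card A"
      unfolding B_def using A_sub by (simp add: card_Diff_subset finite_subset)
    then have "card B \<le> k - 1" using False assms(2) by linarith
    then obtain g where g: "\<forall>t<k - 1. g t \<in> Pset m" "\<And>i. (\<Sum>t<k - 1. g t i) = of_bool (i \<in> B)"
      using sum_Pset_eq_indicator[of B m "k - 1"] by (auto simp: B_def)
    have k: "k = Suc (k - 1)" using assms(2) by simp
    show ?thesis
    proof (intro exI[of _ "g(k - 1 := ones_vec m)"] conjI allI impI)
      show "(g(k - 1 := ones_vec m)) t \<in> Pset m" if "t < k" for t
        using that g(1) by (auto simp: Pset_def)
      show "(\<Sum>t<k. (g(k - 1 := ones_vec m)) t i) = u i" for i
        using g(2)[of i] u_eq[of i] A_sub
        by (subst k) (auto simp: B_def ones_vec_def)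
    qed
  qed
qed

lemma card_Pset_1: "card (Pset 1) = 2"
proof -
  have "Pset 1 = {zero_vec 1, ones_vec 1}"
    by (auto simp: Pset_def unit_vec_def ones_vec_def fun_eq_iff)
  moreover have "zero_vec 1 \<noteq> ones_vec 1"
    by (auto simp: zero_vec_def ones_vec_def fun_eq_iff)
  ultimately show ?thesis by simp
qed

lemma card_Pset:
  assumes "m \<ge> 2"
  shows "card (Pset m) = m + 2"
proof -
  have "Pset m = insert (zero_vec m) (insert (ones_vec m) (unit_vec m ` {..<m}))"
    by (auto simp: Pset_def)
  moreover have "inj_on (unit_vec m) {..<m}"
    by (auto simp: inj_on_def unit_vec_def fun_eq_iff)
  moreover have "zero_vec m \<notin> unit_vec m ` {..<m}"
    by (auto simp: zero_vec_def unit_vec_def fun_eq_iff) (metis zero_neq_one)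
  moreover have "ones_vec m \<notin> unit_vec m ` {..<m}"
  proof
    assume "ones_vec m \<in> unit_vec m ` {..<m}"
    then obtain a where a: "a < m" "ones_vec m = unit_vec m a" by auto
    define b :: nat where "b = (if a = 0 then 1 else 0)"
    have "b < m" "b \<noteq> a" using assms a by (auto simp: b_def)
    then show False using fun_cong[OF a(2), of b] by (auto simp: ones_vec_def unit_vec_def)
  qed
  moreover have "zero_vec m \<noteq> ones_vec m"
    using assms by (auto simp: zero_vec_def ones_vec_def fun_eq_iff intro!: exI[of _ 0])
  ultimately show ?thesis by (simp add: card_image)
qed

lemma Tc_bounds:
  assumes "T \<ge> 1" "k \<ge> 1"
  shows "Tc T k \<ge> 1" "(2*k - 1) * (Tc T k - 1) < T" "T \<le> (2*k - 1) * Tc T k"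
proof -
  define d where "d = 2*k - 1"
  have d: "real d > 0" using assms(2) by (simp add: d_def)
  define c where "c = \<lceil>real T / real d\<rceil>"
  have upper: "real T \<le> of_int c * real d" and lower: "(of_int c - 1) * real d < real T"
    unfolding c_def using ceiling_divide_upper[OF d] ceiling_divide_lower[OF d] by blast+
  have "of_int c * real d > 0" using upper assms(1) by linarith
  then have "c \<ge> 1" using d by (simp add: zero_less_mult_iff)
  moreover have "Tc T k = nat c" unfolding Tc_def c_def d_def ..
  ultimately have Tc: "real (Tc T k) = of_int c" "Tc T k \<ge> 1" by simp_all
  show "Tc T k \<ge> 1" by (fact Tc(2))
  have "real T \<le> real d * real (Tc T k)" using upper Tc(1) by (simp only: mult.commute)
  then show "T \<le> (2*k - 1) * Tc T k" unfolding d_def of_nat_mult[symmetric] of_nat_le_iff .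
  have "real d * real (Tc T k - 1) < real T" using lower Tc by (simp only: of_nat_diff mult.commute of_nat_1)
  then show "(2*k - 1) * (Tc T k - 1) < T" unfolding d_def of_nat_mult[symmetric] of_nat_less_iff .
qed

lemma Tlast_bounds:
  assumes "T \<ge> 1" "k \<ge> 1"
  shows "1 \<le> Tlast T k" "Tlast T k \<le> 2*k - 1"
proof -
  have "Tc T k = Suc (Tc T k - 1)" using Tc_bounds(1)[OF assms] by simp
  then have "(2*k - 1) * Tc T k = (2*k - 1) * (Tc T k - 1) + (2*k - 1)"
    by (metis mult_Suc_right add.commute)
  then show "1 \<le> Tlast T k" "Tlast T k \<le> 2*k - 1"
    using Tc_bounds[OF assms] unfolding Tlast_def by linarith+
qed

lemma blocklen_le: "T \<ge> 1 \<Longrightarrow> k \<ge> 1 \<Longrightarrow> blocklen T k j \<le> 2*k - 1"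
  using Tlast_bounds[of T k] by (simp add: blocklen_def)

lemma concat_blocks_apply:
  "i < T \<Longrightarrow> concat_blocks T k w i = w (i div (2*k - 1)) (i mod (2*k - 1))"
  unfolding concat_blocks_def Let_def minus_mult_div_eq_mod by simp

lemma block_position_iff:
  assumes "T \<ge> 1" "k \<ge> 1" "p < 2*k - 1"
  shows "(2*k - 1) * j + p < T \<longleftrightarrow> j < Tc T k \<and> p < blocklen T k j"
proof -
  note Tc = Tc_bounds[OF assms(1,2)]
  define d where "d = 2*k - 1"
  have p: "p < d" using assms(3) by (simp add: d_def)
  consider (inner) "j < Tc T k - 1" | (last) "j = Tc T k - 1" | (outside) "Tc T k \<le> j"
    using Tc(1) by linarith
  then show ?thesis
  proof cases
    case inner
    have "d * j + p < d * Suc j" using p by simp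
    also have "\<dots> \<le> d * (Tc T k - 1)" using inner by (intro mult_le_mono2) simp
    finally show ?thesis
      using inner p Tc(2) unfolding blocklen_def d_def[symmetric] by auto
  next
    case last
    then show ?thesis unfolding blocklen_def Tlast_def d_def[symmetric] using Tc(1) by auto
  next
    case outside
    then have "T \<le> d * j + p" using Tc(3) mult_le_mono2[OF outside, of d] unfolding d_def by linarith
    then show ?thesis using outside d_def by simp
  qed
qed

lemma concat_blocks_block:
  assumes "T \<ge> 1" "k \<ge> 1" "j < Tc T k" "p < blocklen T k j"
  shows "concat_blocks T k w ((2*k - 1) * j + p) = w j p"
proof -
  have "p < 2*k - 1" using assms(4) blocklen_le[OF assms(1,2)] by (rule less_le_trans)
  then show ?thesis
    using block_position_iff[OF assms(1,2)] assms(3,4) by (simp add: concat_blocks_apply)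
qed

lemma inj_on_concat_blocks:
  assumes "T \<ge> 1" "k \<ge> 1"
  shows "inj_on (concat_blocks T k) (PiE {0..<Tc T k} (\<lambda>j. Pset (blocklen T k j)))"
proof (rule inj_onI)
  fix w w' assume w: "w \<in> PiE {0..<Tc T k} (\<lambda>j. Pset (blocklen T k j))"
    and w': "w' \<in> PiE {0..<Tc T k} (\<lambda>j. Pset (blocklen T k j))"
    and eq: "concat_blocks T k w = concat_blocks T k w'"
  show "w = w'"
  proof (rule PiE_ext[OF w w'], rule ext)
    fix j p assume j: "j \<in> {0..<Tc T k}"
    show "w j p = w' j p"
    proof (cases "p < blocklen T k j")
      case True
      then show ?thesis using concat_blocks_block[OF assms _ True] j eq by (metis atLeastLessThan_iff)
    next
      case False
      have "w j \<in> F2vecs (blocklen T k j)" "w' j \<in> F2vecs (blocklen T k j)"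
        using PiE_mem[OF w j] PiE_mem[OF w' j] Pset_subset_F2vecs by blast+
      then show ?thesis using False by (simp add: F2vecs_def)
    qed
  qed
qed

lemma card_Prows:
  assumes "T \<ge> 1" "k \<ge> 1"
  shows "card (Prows T k) = (\<Prod>j<Tc T k. card (Pset (blocklen T k j)))"
proof -
  have "finite (Pset m)" for m by (simp add: Pset_def)
  then show ?thesis
    unfolding Prows_def using inj_on_concat_blocks[OF assms]
    by (simp add: card_image card_PiE lessThan_atLeast0)
qed

lemma prod_card_Pset_blocklen:
  assumes "T \<ge> 1" "k \<ge> 1"
  shows "(\<Prod>j<Tc T k. card (Pset (blocklen T k j)))
    = card (Pset (2*k - 1)) ^ (Tc T k - 1) * card (Pset (Tlast T k))"
proof -
  have Tc: "Tc T k = Suc (Tc T k - 1)" using Tc_bounds(1)[OF assms] by simp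
  have "(\<Prod>j<Tc T k. card (Pset (blocklen T k j)))
      = (\<Prod>j<Tc T k - 1. card (Pset (blocklen T k j))) * card (Pset (blocklen T k (Tc T k - 1)))"
    by (subst Tc) simp
  also have "(\<Prod>j<Tc T k - 1. card (Pset (blocklen T k j))) = card (Pset (2*k - 1)) ^ (Tc T k - 1)"
    by (simp add: blocklen_def)
  finally show ?thesis by (simp add: blocklen_def)
qed

lemma prod_card_Pset_blocklen_closed_form:
  assumes "T \<ge> 1" "k \<ge> 1"
  shows "(\<Prod>j<Tc T k. card (Pset (blocklen T k j))) =
         (if k = 1 then 2 ^ T
          else if Tlast T k = 1 then 2 * (2*k + 1) ^ (Tc T k - 1)
          else (2*k + 1) ^ (Tc T k - 1) * (Tlast T k + 2))"
proof -
  note prod = prod_card_Pset_blocklen[OF assms]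
  note Tlast = Tlast_bounds[OF assms]
  show ?thesis
  proof (cases "k = 1")
    case True
    then have "2*k - 1 = 1" "Tlast T k = 1" "Tc T k = T" using Tlast by (simp_all add: Tc_def)
    then have "(\<Prod>j<Tc T k. card (Pset (blocklen T k j))) = 2 ^ (T - 1) * 2"
      using prod by (simp only: card_Pset_1)
    also have "\<dots> = 2 ^ T" using assms(1) by (cases T) auto
    finally show ?thesis using True by simp
  next
    case False
    then have "card (Pset (2*k - 1)) = 2*k + 1" using assms(2) by (simp add: card_Pset)
    moreover have "card (Pset (Tlast T k)) = (if Tlast T k = 1 then 2 else Tlast T k + 2)"
      using Tlast(1) card_Pset_1 by (simp add: card_Pset)
    ultimately show ?thesis using prod False by simp
  qed
qed

lemma Prows_sum_cover:
  assumes "T \<ge> 1" "k \<ge> 1" "v \<in> F2vecs T"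
  shows "\<exists>S \<subseteq> Prows T k. finite S \<and> card S \<le> k \<and> (\<forall>i. v i = (\<Sum>r\<in>S. r i))"
proof -
  define d where "d = 2*k - 1"
  define block where "block j = (\<lambda>p. if p < blocklen T k j then v (d * j + p) else 0)" for j
  have "\<exists>g. (\<forall>t<k. g t \<in> Pset (blocklen T k j)) \<and> (\<forall>p. (\<Sum>t<k. g t p) = block j p)" for j
  proof (rule F2vecs_sum_Pset)
    show "block j \<in> F2vecs (blocklen T k j)" by (simp add: block_def F2vecs_def)
    show "blocklen T k j < 2*k" using blocklen_le[OF assms(1,2), of j] assms(2) by linarith
  qed
  then obtain G where G: "\<And>j t. t < k \<Longrightarrow> G j t \<in> Pset (blocklen T k j)"
    and sum_G: "\<And>j p. (\<Sum>t<k. G j t p) = block j p"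
    by metis
  define row where "row t = concat_blocks T k (restrict (\<lambda>j. G j t) {0..<Tc T k})" for t
  have rows: "row ` {..<k} \<subseteq> Prows T k"
    unfolding Prows_def row_def using G by auto
  have "(\<Sum>t<k. row t i) = v i" for i
  proof (cases "i < T")
    case False
    then show ?thesis using assms(3) by (simp add: F2vecs_def row_def concat_blocks_def)
  next
    case True
    have "i mod d < d" using assms(2) by (simp add: d_def)
    then have pos: "i div d < Tc T k" "i mod d < blocklen T k (i div d)"
      using block_position_iff[OF assms(1,2), of "i mod d" "i div d"] True
      by (simp_all add: d_def)
    then have "row t i = G (i div d) t (i mod d)" for t
      using True by (simp add: row_def concat_blocks_apply d_def)
    then have "(\<Sum>t<k. row t i) = block (i div d) (i mod d)" using sum_G by simp
    also have "\<dots> = v i" using pos(2) by (simp add: block_def)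
    finally show ?thesis .
  qed
  moreover obtain S where "S \<subseteq> row ` {..<k}" "card S \<le> k"
    and "\<forall>i. (\<Sum>t<k. row t i) = (\<Sum>r\<in>S. r i)"
    using sum_bit_vectors_as_sum_of_distinct[of row k] by blast
  ultimately show ?thesis using rows by (metis finite_subset finite_imageI finite_lessThan order_trans)
qed

theorem mainTheorem6:
  fixes T k :: nat
  assumes "T \<ge> 2" and "1 \<le> k" and "int k < \<lceil>real T / 2\<rceil>"
  shows "card (Prows T k) = (\<Prod>j<Tc T k. card (Pset (blocklen T k j)))
     \<and> (\<Prod>j<Tc T k. card (Pset (blocklen T k j))) =
         (if k = 1 then 2 ^ T
          else if Tlast T k = 1 then 2 * (2*k + 1) ^ (Tc T k - 1)
          else (2*k + 1) ^ (Tc T k - 1) * (Tlast T k + 2))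
     \<and> (\<forall>v \<in> F2vecs T. \<exists>S. S \<subseteq> Prows T k \<and> finite S \<and> card S \<le> k
            \<and> (\<forall>i. v i = (\<Sum>r\<in>S. r i)))"
proof -
  have T: "T \<ge> 1" using assms(1) by simp
  show ?thesis
    using card_Prows[OF T assms(2)] prod_card_Pset_blocklen_closed_form[OF T assms(2)]
      Prows_sum_cover[OF T assms(2)]
    by blast
qed

end
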